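(* Let $\Sigma$ be a non-empty finite alphabet and $L \subseteq \Sigma^*$ a commutative group language over $\Sigma$. Then for every $\Gamma \subseteq \Sigma$, the language $\pi_\Gamma(L)$ is a commutative group language over the alphabet $\Gamma$.
   Context: $L$ is commutative if for every $w \in L$, every word $u$ with $|u|_a = |w|_a$ for all letters $a$ also lies in $L$. A group language over an alphabet $\Delta$ is a language recognized by a permutation automaton over $\Delta$, i.e. a complete deterministic finite automaton $(\Delta,Q,\delta,q_0,F)$ in which each letter acts as a permutation of $Q$; by convention, for $\Delta = \emptyset$ the group languages over $\Delta$ are exactly $\emptyset$ and $\{\varepsilon\}$. For $\Gamma \subseteq \Sigma$, $\pi_\Gamma : \Sigma^* \to \Gamma^*$ is the homomorphism with $\pi_\Gamma(x) = x$ for $x \in \Gamma$ and $\pi_\Gamma(x) = \varepsilon$ otherwise, applied elementwise to languages. *)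

theory Defs
  imports Main
begin

definition commutative_lang :: "'a list set \<Rightarrow> bool" where
  "commutative_lang L \<longleftrightarrow>
     (\<forall>w \<in> L. \<forall>u. (\<forall>a. count_list u a = count_list w a) \<longrightarrow> u \<in> L)"

text \<open>Permutation automaton over \<open>\<Delta>\<close>: finite nonempty state set \<open>Q\<close> (states encoded as
  natural numbers, which is no loss of generality for finite automata), complete deterministic
  transition function, every letter acting as a permutation of \<open>Q\<close>.\<close>

definition perm_automaton :: "'a set \<Rightarrow> nat set \<Rightarrow> (nat \<Rightarrow> 'a \<Rightarrow> nat) \<Rightarrow> nat \<Rightarrow> nat set \<Rightarrow> bool" where
  "perm_automaton \<Delta> Q \<delta> q0 F \<longleftrightarrow>
     finite Q \<and> q0 \<in> Q \<and> F \<subseteq> Q \<and>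
     (\<forall>a \<in> \<Delta>. bij_betw (\<lambda>q. \<delta> q a) Q Q)"

definition accepted_lang :: "'a set \<Rightarrow> (nat \<Rightarrow> 'a \<Rightarrow> nat) \<Rightarrow> nat \<Rightarrow> nat set \<Rightarrow> 'a list set" where
  "accepted_lang \<Delta> \<delta> q0 F = {w \<in> lists \<Delta>. foldl \<delta> q0 w \<in> F}"

definition group_lang :: "'a set \<Rightarrow> 'a list set \<Rightarrow> bool" where
  "group_lang \<Delta> L \<longleftrightarrow>
     (if \<Delta> = {} then L = {} \<or> L = {[]}
      else (\<exists>Q \<delta> q0 F. perm_automaton \<Delta> Q \<delta> q0 F \<and> L = accepted_lang \<Delta> \<delta> q0 F))"

definition proj :: "'a set \<Rightarrow> 'a list \<Rightarrow> 'a list" where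
  "proj \<Gamma> w = filter (\<lambda>x. x \<in> \<Gamma>) w"

end

theory Submission
  imports Defs "HOL-Combinatorics.Permutations"
begin

text \<open>Each letter of a permutation automaton permutes a finite state set, so for some \<open>N > 0\<close>
  every \<open>a\<^sup>N\<close> acts as the identity. By commutativity a word may be replaced by the block word
  \<open>a\<^sub>1\<^bsup>n\<^sub>1\<^esup> \<dots> a\<^sub>k\<^bsup>n\<^sub>k\<^esup>\<close> of its letter counts, whose exponents only matter modulo \<open>N\<close>;
  hence membership in \<open>L\<close> depends only on the Parikh vector modulo \<open>N\<close>. This property passes to
  \<open>\<pi>\<^sub>\<Gamma>(L)\<close>: a word over \<open>\<Gamma>\<close> is lifted by appending the letters outside \<open>\<Gamma>\<close> of a preimage.
  Finally, a language over \<open>\<Gamma>\<close> determined by Parikh vectors modulo \<open>N\<close> is recognised by the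
  permutation automaton that counts every letter modulo \<open>N\<close>.\<close>

lemma bij_betw_funpow_return:
  assumes "finite Q" "bij_betw p Q Q" "q \<in> Q"
  obtains n where "n > 0" "(p ^^ n) q = q"
proof -
  define p' where "p' x = (if x \<in> Q then p x else x)" for x
  have "bij_betw p' Q Q"
    using assms(2) by (rule bij_betw_cong[THEN iffD1, rotated]) (simp add: p'_def)
  then have "permutation p'"
    using assms(1) by (intro permutes_imp_permutation bij_imp_permutes) (auto simp: p'_def)
  then obtain n where "n > 0" "(p' ^^ n) q = q"
    by (rule permutation_self)
  moreover have "(p' ^^ k) q = (p ^^ k) q" for k
  proof (induction k)
    case (Suc k)
    have "(p ^^ k) q \<in> Q" using bij_betw_funpow[OF assms(2)] assms(3) by (blast dest: bij_betwE)
    with Suc show ?case by (simp add: p'_def)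
  qed simp
  ultimately show thesis using that by simp
qed

lemma common_period:
  assumes "finite A" "finite Q" "\<And>a. a \<in> A \<Longrightarrow> bij_betw (f a) Q Q"
  obtains N where "N > 0" "\<And>a q. a \<in> A \<Longrightarrow> q \<in> Q \<Longrightarrow> (f a ^^ N) q = q"
proof -
  have "\<exists>n > 0. (f a ^^ n) q = q" if "a \<in> A" "q \<in> Q" for a q
    using bij_betw_funpow_return[OF assms(2) assms(3) \<open>q \<in> Q\<close>] that by metis
  then obtain n where n: "\<And>a q. a \<in> A \<Longrightarrow> q \<in> Q \<Longrightarrow> n a q > 0 \<and> (f a ^^ n a q) q = q"
    by metis
  define N where "N = (\<Prod>(a, q) \<in> A \<times> Q. n a q)"
  have "N > 0"
    unfolding N_def using n by (intro prod_pos) auto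
  moreover have "(f a ^^ N) q = q" if "a \<in> A" "q \<in> Q" for a q
  proof -
    have "n a q dvd N"
      unfolding N_def using that assms(1,2) dvd_prodI[of "A \<times> Q" "(a, q)" "\<lambda>(a, q). n a q"] by simp
    then show ?thesis
      using funpow_mod_eq[where f="f a" and n="n a q" and x=q and m=N] n[OF that] by simp
  qed
  ultimately show thesis using that by blast
qed

lemma foldl_in_states:
  assumes "\<And>a q. a \<in> \<Delta> \<Longrightarrow> q \<in> Q \<Longrightarrow> \<delta> q a \<in> Q" "q \<in> Q" "w \<in> lists \<Delta>"
  shows "foldl \<delta> q w \<in> Q"
  using assms(2,3) by (induction w arbitrary: q) (auto intro: assms(1))

lemma foldl_replicate: "foldl \<delta> q (replicate n a) = ((\<lambda>q. \<delta> q a) ^^ n) q"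
  by (induction n arbitrary: q) (simp_all add: funpow_Suc_right del: funpow.simps(2))

definition letter_blocks :: "'a list \<Rightarrow> ('a \<Rightarrow> nat) \<Rightarrow> 'a list" where
  "letter_blocks as c = concat (map (\<lambda>a. replicate (c a) a) as)"

lemma letter_blocks_in_lists: "set as \<subseteq> \<Delta> \<Longrightarrow> letter_blocks as c \<in> lists \<Delta>"
  unfolding letter_blocks_def by auto

lemma count_list_replicate: "count_list (replicate n a) b = (if a = b then n else 0)"
  by (induction n) auto

lemma count_list_letter_blocks:
  "distinct as \<Longrightarrow> count_list (letter_blocks as c) b = (if b \<in> set as then c b else 0)"
  unfolding letter_blocks_def by (induction as) (auto simp: count_list_replicate)

lemma letter_blocks_cong: "(\<And>a. a \<in> set as \<Longrightarrow> c a = c' a) \<Longrightarrow> letter_blocks as c = letter_blocks as c'"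
  unfolding letter_blocks_def by (induction as) auto

lemma commutative_lang_iff_letter_blocks:
  assumes "commutative_lang L" "distinct as" "w \<in> lists (set as)"
  shows "letter_blocks as (count_list w) \<in> L \<longleftrightarrow> w \<in> L"
proof -
  have "count_list (letter_blocks as (count_list w)) a = count_list w a" for a
    using assms(2,3) by (auto simp: count_list_letter_blocks count_list_0_iff)
  then show ?thesis
    using assms(1) unfolding commutative_lang_def by metis
qed

lemma foldl_letter_blocks_mod_period:
  assumes closed: "\<And>a q. a \<in> \<Delta> \<Longrightarrow> q \<in> Q \<Longrightarrow> \<delta> q a \<in> Q"
    and period: "\<And>a q. a \<in> \<Delta> \<Longrightarrow> q \<in> Q \<Longrightarrow> ((\<lambda>q. \<delta> q a) ^^ N) q = q"
    and "set as \<subseteq> \<Delta>" "q \<in> Q"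
  shows "foldl \<delta> q (letter_blocks as (\<lambda>a. c a mod N)) = foldl \<delta> q (letter_blocks as c)"
  using assms(3,4)
proof (induction as arbitrary: q)
  case (Cons a as)
  have "foldl \<delta> q (replicate (c a mod N) a) = foldl \<delta> q (replicate (c a) a)"
    using funpow_mod_eq[OF period] Cons.prems by (simp add: foldl_replicate)
  moreover have "foldl \<delta> q (replicate (c a) a) \<in> Q"
    using Cons.prems by (intro foldl_in_states[OF closed]) auto
  ultimately show ?case
    using Cons by (simp add: letter_blocks_def)
qed (simp add: letter_blocks_def)

definition parikh_mod :: "nat \<Rightarrow> 'a set \<Rightarrow> 'a list \<Rightarrow> 'a \<Rightarrow> nat" where
  "parikh_mod N \<Gamma> w = (\<lambda>a\<in>\<Gamma>. count_list w a mod N)"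

definition parikh_mod_closed :: "nat \<Rightarrow> 'a set \<Rightarrow> 'a list set \<Rightarrow> bool" where
  "parikh_mod_closed N \<Gamma> L \<longleftrightarrow>
     (\<forall>w \<in> L. \<forall>u \<in> lists \<Gamma>. parikh_mod N \<Gamma> u = parikh_mod N \<Gamma> w \<longrightarrow> u \<in> L)"

lemma accepted_lang_iff_parikh_mod:
  assumes "perm_automaton \<Sigma> Q \<delta> q0 F" "commutative_lang (accepted_lang \<Sigma> \<delta> q0 F)"
    and "distinct as" "set as = \<Sigma>"
    and period: "\<And>a q. a \<in> \<Sigma> \<Longrightarrow> q \<in> Q \<Longrightarrow> ((\<lambda>q. \<delta> q a) ^^ N) q = q"
    and "w \<in> lists \<Sigma>"
  shows "w \<in> accepted_lang \<Sigma> \<delta> q0 F \<longleftrightarrow> foldl \<delta> q0 (letter_blocks as (parikh_mod N \<Sigma> w)) \<in> F"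
proof -
  have closed: "\<And>a q. a \<in> \<Sigma> \<Longrightarrow> q \<in> Q \<Longrightarrow> \<delta> q a \<in> Q" and "q0 \<in> Q"
    using assms(1) unfolding perm_automaton_def by (auto dest: bij_betwE)
  have "letter_blocks as (parikh_mod N \<Sigma> w) = letter_blocks as (\<lambda>a. count_list w a mod N)"
    using assms(4) by (intro letter_blocks_cong) (simp add: parikh_mod_def)
  then have "foldl \<delta> q0 (letter_blocks as (parikh_mod N \<Sigma> w))
      = foldl \<delta> q0 (letter_blocks as (count_list w))"
    using foldl_letter_blocks_mod_period[where \<Delta>=\<Sigma> and \<delta>=\<delta>, OF closed period]
      assms(4) \<open>q0 \<in> Q\<close> by simp
  moreover have "letter_blocks as (count_list w) \<in> lists \<Sigma>"
    using assms(4) by (simp add: letter_blocks_in_lists)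
  ultimately show ?thesis
    using commutative_lang_iff_letter_blocks[OF assms(2,3)] assms(4,6)
    by (auto simp: accepted_lang_def)
qed

lemma commutative_perm_lang_parikh_mod_closed:
  assumes "perm_automaton \<Sigma> Q \<delta> q0 F" "finite \<Sigma>" "commutative_lang (accepted_lang \<Sigma> \<delta> q0 F)"
  obtains N where "N > 0" "parikh_mod_closed N \<Sigma> (accepted_lang \<Sigma> \<delta> q0 F)"
proof -
  obtain N where "N > 0" and period: "\<And>a q. a \<in> \<Sigma> \<Longrightarrow> q \<in> Q \<Longrightarrow> ((\<lambda>q. \<delta> q a) ^^ N) q = q"
    using common_period[of \<Sigma> Q "\<lambda>a q. \<delta> q a"] assms(1,2) unfolding perm_automaton_def by auto
  obtain as where "distinct as" "set as = \<Sigma>"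
    using finite_distinct_list[OF assms(2)] by blast
  note iff = accepted_lang_iff_parikh_mod[OF assms(1,3) this period]
  have "parikh_mod_closed N \<Sigma> (accepted_lang \<Sigma> \<delta> q0 F)"
    unfolding parikh_mod_closed_def
  proof (intro ballI impI)
    fix w u assume "w \<in> accepted_lang \<Sigma> \<delta> q0 F" "u \<in> lists \<Sigma>"
      "parikh_mod N \<Sigma> u = parikh_mod N \<Sigma> w"
    then show "u \<in> accepted_lang \<Sigma> \<delta> q0 F"
      using iff[of u] iff[of w] by (simp add: accepted_lang_def)
  qed
  with \<open>N > 0\<close> show thesis by (rule that)
qed

lemma count_list_filter: "count_list (filter P w) a = (if P a then count_list w a else 0)"
  by (induction w) auto

lemma count_list_proj: "count_list (proj \<Gamma> w) a = (if a \<in> \<Gamma> then count_list w a else 0)"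
  unfolding proj_def by (simp add: count_list_filter)

lemma proj_image_subset_lists: "proj \<Gamma> ` L \<subseteq> lists \<Gamma>"
  unfolding proj_def by auto

lemma proj_append_filter_notin:
  "u \<in> lists \<Gamma> \<Longrightarrow> proj \<Gamma> (u @ filter (\<lambda>x. x \<notin> \<Gamma>) w) = u"
  unfolding proj_def by (auto simp: filter_id_conv)

lemma count_list_append_filter_notin:
  "u \<in> lists \<Gamma> \<Longrightarrow>
     count_list (u @ filter (\<lambda>x. x \<notin> \<Gamma>) w) a = (if a \<in> \<Gamma> then count_list u a else count_list w a)"
  by (auto simp: count_list_filter count_list_0_iff)

lemma commutative_lang_proj:
  assumes "commutative_lang L"
  shows "commutative_lang (proj \<Gamma> ` L)"
  unfolding commutative_lang_def
proof (intro ballI allI impI)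
  fix w' u assume "w' \<in> proj \<Gamma> ` L" and u: "\<forall>a. count_list u a = count_list w' a"
  then obtain w where w: "w \<in> L" "w' = proj \<Gamma> w" by blast
  have "set u \<subseteq> \<Gamma>"
  proof
    fix a assume "a \<in> set u"
    then have "count_list w' a \<noteq> 0" using u by (metis count_list_0_iff)
    then show "a \<in> \<Gamma>" using w(2) by (simp add: count_list_proj split: if_splits)
  qed
  then have "u \<in> lists \<Gamma>" by auto
  define v where "v = u @ filter (\<lambda>x. x \<notin> \<Gamma>) w"
  have "count_list v a = count_list w a" for a
    using count_list_append_filter_notin[OF \<open>u \<in> lists \<Gamma>\<close>, of w a] u w(2)
    by (simp add: v_def count_list_proj)
  then have "v \<in> L"
    using assms w unfolding commutative_lang_def by blast
  then show "u \<in> proj \<Gamma> ` L"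
    using proj_append_filter_notin[OF \<open>u \<in> lists \<Gamma>\<close>] unfolding v_def by (metis image_eqI)
qed

lemma parikh_mod_closed_proj:
  assumes "parikh_mod_closed N \<Sigma> L" "L \<subseteq> lists \<Sigma>" "\<Gamma> \<subseteq> \<Sigma>"
  shows "parikh_mod_closed N \<Gamma> (proj \<Gamma> ` L)"
  unfolding parikh_mod_closed_def
proof (intro ballI impI)
  fix w' u assume "w' \<in> proj \<Gamma> ` L" "u \<in> lists \<Gamma>"
    and u: "parikh_mod N \<Gamma> u = parikh_mod N \<Gamma> w'"
  then obtain w where w: "w \<in> L" "w' = proj \<Gamma> w" by blast
  define v where "v = u @ filter (\<lambda>x. x \<notin> \<Gamma>) w"
  have "v \<in> lists \<Sigma>"
    using \<open>u \<in> lists \<Gamma>\<close> w assms(2,3) by (auto simp: v_def)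
  moreover have "parikh_mod N \<Sigma> v = parikh_mod N \<Sigma> w"
  proof
    fix a
    have "count_list v a = (if a \<in> \<Gamma> then count_list u a else count_list w a)"
      unfolding v_def using \<open>u \<in> lists \<Gamma>\<close> by (rule count_list_append_filter_notin)
    then show "parikh_mod N \<Sigma> v a = parikh_mod N \<Sigma> w a"
      using fun_cong[OF u, of a] w(2) by (auto simp: parikh_mod_def count_list_proj)
  qed
  ultimately have "v \<in> L"
    using assms(1) w(1) unfolding parikh_mod_closed_def by blast
  then show "u \<in> proj \<Gamma> ` L"
    using proj_append_filter_notin[OF \<open>u \<in> lists \<Gamma>\<close>] unfolding v_def by (metis image_eqI)
qed

lemma bij_betw_fun_upd_PiE:
  assumes "bij_betw \<sigma> A A" "a \<in> I"
  shows "bij_betw (\<lambda>s. s(a := \<sigma> (s a))) (I \<rightarrow>\<^sub>E A) (I \<rightarrow>\<^sub>E A)"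
proof -
  define \<tau> where "\<tau> = inv_into A \<sigma>"
  have \<tau>: "bij_betw \<tau> A A" unfolding \<tau>_def using assms(1) by (rule bij_betw_inv_into)
  have upd: "s(a := y) \<in> I \<rightarrow>\<^sub>E A" if "s \<in> I \<rightarrow>\<^sub>E A" "y \<in> A" for s y
    using PiE_fun_upd[where x=a, OF that(2,1)] insert_absorb[OF assms(2)] by simp
  have memA: "s a \<in> A" if "s \<in> I \<rightarrow>\<^sub>E A" for s
    using that assms(2) by (rule PiE_mem)
  then have images: "\<sigma> (s a) \<in> A" "\<tau> (s a) \<in> A" if "s \<in> I \<rightarrow>\<^sub>E A" for s
    using that assms(1) \<tau> by (auto dest: bij_betwE)
  show ?thesis
  proof (rule bij_betwI[where g = "\<lambda>s. s(a := \<tau> (s a))"])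
    show "(\<lambda>s. s(a := \<sigma> (s a))) \<in> (I \<rightarrow>\<^sub>E A) \<rightarrow> (I \<rightarrow>\<^sub>E A)"
      by (intro Pi_I upd images)
    show "(\<lambda>s. s(a := \<tau> (s a))) \<in> (I \<rightarrow>\<^sub>E A) \<rightarrow> (I \<rightarrow>\<^sub>E A)"
      by (intro Pi_I upd images)
    show "s(a := \<sigma> (s a), a := \<tau> ((s(a := \<sigma> (s a))) a)) = s" if "s \<in> I \<rightarrow>\<^sub>E A" for s
      using memA[OF that] assms(1) unfolding \<tau>_def by (simp add: bij_betw_inv_into_left)
    show "s(a := \<tau> (s a), a := \<sigma> ((s(a := \<tau> (s a))) a)) = s" if "s \<in> I \<rightarrow>\<^sub>E A" for s
      using memA[OF that] assms(1) unfolding \<tau>_def by (simp add: bij_betw_inv_into_right)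
  qed
qed

lemma bij_betw_Suc_mod: "bij_betw (\<lambda>x. Suc x mod N) {..<N} {..<N}"
proof (cases "N = 0")
  case False
  have "inj_on (\<lambda>x. Suc x mod N) {..<N}"
    by (auto simp: inj_on_def mod_Suc split: if_splits)
  moreover have "(\<lambda>x. Suc x mod N) ` {..<N} \<subseteq> {..<N}"
    using False by auto
  ultimately show ?thesis
    by (simp add: bij_betw_def endo_inj_surj)
qed simp

lemma perm_automaton_nat_states:
  fixes \<delta>' :: "'s \<Rightarrow> 'a \<Rightarrow> 's"
  assumes "finite Q'" "q0' \<in> Q'" and bij: "\<And>a. a \<in> \<Delta> \<Longrightarrow> bij_betw (\<lambda>q. \<delta>' q a) Q' Q'"
  obtains Q \<delta> q0 F where "perm_automaton \<Delta> Q \<delta> q0 F"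
    and "accepted_lang \<Delta> \<delta> q0 F = {w \<in> lists \<Delta>. foldl \<delta>' q0' w \<in> F'}"
proof -
  define Q where "Q = {0..<card Q'}"
  obtain h where h: "bij_betw h Q Q'"
    unfolding Q_def using ex_bij_betw_nat_finite[OF assms(1)] by blast
  define g where "g = inv_into Q h"
  have g: "bij_betw g Q' Q" and hg: "\<And>x. x \<in> Q' \<Longrightarrow> h (g x) = x"
    unfolding g_def using h by (auto intro: bij_betw_inv_into bij_betw_inv_into_right)
  define \<delta> where "\<delta> q a = g (\<delta>' (h q) a)" for q a
  have bij\<delta>: "bij_betw (\<lambda>q. \<delta> q a) Q Q" if "a \<in> \<Delta>" for a
  proof -
    have "bij_betw (g \<circ> (\<lambda>q. \<delta>' q a) \<circ> h) Q Q"
      using h g bij[OF that] by (meson bij_betw_trans)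
    then show ?thesis unfolding \<delta>_def by (simp add: comp_def)
  qed
  have h_foldl: "h (foldl \<delta> q w) = foldl \<delta>' (h q) w" if "q \<in> Q" "w \<in> lists \<Delta>" for q w
    using that
  proof (induction w arbitrary: q)
    case (Cons a w)
    have "\<delta>' (h q) a \<in> Q'"
      using Cons.prems h bij by (meson bij_betwE listsE)
    then have "h (\<delta> q a) = \<delta>' (h q) a" unfolding \<delta>_def using hg by simp
    moreover have "\<delta> q a \<in> Q" using bij\<delta> Cons.prems by (meson bij_betwE listsE)
    ultimately show ?case using Cons by simp
  qed simp
  define F where "F = {q \<in> Q. h q \<in> F'}"
  have "g q0' \<in> Q" using g assms(2) by (blast dest: bij_betwE)
  have "finite Q" by (simp add: Q_def)
  then have "perm_automaton \<Delta> Q \<delta> (g q0') F"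
    unfolding perm_automaton_def F_def using \<open>g q0' \<in> Q\<close> bij\<delta> by auto
  moreover have "foldl \<delta> (g q0') w \<in> F \<longleftrightarrow> foldl \<delta>' q0' w \<in> F'" if "w \<in> lists \<Delta>" for w
    using foldl_in_states[where \<delta>=\<delta>, OF _ \<open>g q0' \<in> Q\<close> that] h_foldl[OF \<open>g q0' \<in> Q\<close> that]
      hg[OF assms(2)] bij\<delta> by (auto simp: F_def dest: bij_betwE)
  ultimately show thesis
    using that[of Q \<delta> "g q0'" F] by (auto simp: accepted_lang_def)
qed

lemma parikh_mod_snoc:
  "a \<in> \<Gamma> \<Longrightarrow> (parikh_mod N \<Gamma> w)(a := Suc (parikh_mod N \<Gamma> w a) mod N) = parikh_mod N \<Gamma> (w @ [a])"
  by (auto simp: parikh_mod_def mod_Suc_eq)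

lemma parikh_mod_in_PiE: "parikh_mod N \<Gamma> w \<in> \<Gamma> \<rightarrow>\<^sub>E {..<N} \<longleftrightarrow> \<Gamma> = {} \<or> N > 0"
  by (auto simp: parikh_mod_def)

lemma group_lang_if_parikh_mod_closed:
  assumes "finite \<Gamma>" "N > 0" "L \<subseteq> lists \<Gamma>" "parikh_mod_closed N \<Gamma> L"
  shows "group_lang \<Gamma> L"
proof (cases "\<Gamma> = {}")
  case True
  with assms(3) have "L \<subseteq> {[]}" by auto
  with True show ?thesis by (auto simp: group_lang_def subset_singleton_iff)
next
  case False
  define \<delta>' where "\<delta>' s a = s(a := Suc (s a) mod N)" for s :: "'a \<Rightarrow> nat" and a
  have "finite (\<Gamma> \<rightarrow>\<^sub>E {..<N})"
    using assms(1) by (simp add: finite_PiE)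
  moreover have "parikh_mod N \<Gamma> [] \<in> \<Gamma> \<rightarrow>\<^sub>E {..<N}"
    using assms(2) by (simp add: parikh_mod_in_PiE)
  moreover have "bij_betw (\<lambda>s. \<delta>' s a) (\<Gamma> \<rightarrow>\<^sub>E {..<N}) (\<Gamma> \<rightarrow>\<^sub>E {..<N})" if "a \<in> \<Gamma>" for a
    unfolding \<delta>'_def using bij_betw_Suc_mod that by (rule bij_betw_fun_upd_PiE)
  ultimately obtain Q \<delta> q0 F where "perm_automaton \<Gamma> Q \<delta> q0 F" and accepted:
    "accepted_lang \<Gamma> \<delta> q0 F = {u \<in> lists \<Gamma>. foldl \<delta>' (parikh_mod N \<Gamma> []) u \<in> parikh_mod N \<Gamma> ` L}"
    by (rule perm_automaton_nat_states)
  have "foldl \<delta>' (parikh_mod N \<Gamma> v) u = parikh_mod N \<Gamma> (v @ u)" if "u \<in> lists \<Gamma>" for u v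
    using that by (induction u arbitrary: v) (simp_all add: \<delta>'_def parikh_mod_snoc)
  then have "accepted_lang \<Gamma> \<delta> q0 F = L"
    using assms(3,4) unfolding accepted parikh_mod_closed_def by force
  with \<open>perm_automaton \<Gamma> Q \<delta> q0 F\<close> False show ?thesis
    unfolding group_lang_def by auto
qed

theorem mainTheorem6:
  fixes \<Sigma> :: "'a set" and L :: "'a list set"
  assumes "finite \<Sigma>" and "\<Sigma> \<noteq> {}"
    and "commutative_lang L" and "group_lang \<Sigma> L"
    and "\<Gamma> \<subseteq> \<Sigma>"
  shows "commutative_lang (proj \<Gamma> ` L) \<and> group_lang \<Gamma> (proj \<Gamma> ` L)"
proof
  show "commutative_lang (proj \<Gamma> ` L)"
    using assms(3) by (rule commutative_lang_proj)
  obtain Q \<delta> q0 F where "perm_automaton \<Sigma> Q \<delta> q0 F" and L: "L = accepted_lang \<Sigma> \<delta> q0 F"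
    using assms(2,4) unfolding group_lang_def by auto
  then obtain N where "N > 0" and "parikh_mod_closed N \<Sigma> L"
    using commutative_perm_lang_parikh_mod_closed assms(1,3) by metis
  moreover have "L \<subseteq> lists \<Sigma>"
    unfolding L accepted_lang_def by auto
  ultimately have "parikh_mod_closed N \<Gamma> (proj \<Gamma> ` L)"
    using assms(5) by (intro parikh_mod_closed_proj)
  moreover have "finite \<Gamma>"
    using assms(1,5) by (rule finite_subset[rotated])
  ultimately show "group_lang \<Gamma> (proj \<Gamma> ` L)"
    using \<open>N > 0\<close> proj_image_subset_lists group_lang_if_parikh_mod_closed by metis
qed

end
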